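(* Let $n\ge 1$, $\alpha\ge 0$, and define $f_\alpha:\mathbb{R}^n\to\mathbb{R}$ by \[ f_\alpha(x)=\begin{cases}\|x\|^{1+\alpha}+\frac{\alpha-1}{2}, & \|x\|\le 1,\\ \frac{1+\alpha}{2}\|x\|^2, & \|x\|>1.\end{cases} \] Let $p\ge 1$. If $p<n$, then $f_\alpha\in W^{2,p}_{\mathrm{loc}}(\mathbb{R}^n)$ for every $\alpha\ge 0$; if $p\ge n$, then $f_\alpha\in W^{2,p}_{\mathrm{loc}}(\mathbb{R}^n)$ for every $\alpha>\frac{p-n}{p}$. Moreover, in these cases the distributional Hessian of $f_\alpha$ coincides with its pointwise Hessian, which is given (for $\|x\|\notin\{0,1\}$) by \[ Hf_\alpha(x)=\begin{cases}(1+\alpha)\left(\|x\|^{\alpha-1}\mathrm{Id}_n+(\alpha-1)\|x\|^{\alpha-3}x\otimes x\right), & 0<\|x\|<1,\\ (1+\alpha)\mathrm{Id}_n, & \|x\|>1.\end{cases} \]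
   Context: $\|\cdot\|$ is the Euclidean norm on $\mathbb{R}^n$, and $x\otimes x$ is the matrix with entries $x_ix_j$. *)

theory Defs
  imports "HOL-Analysis.Analysis"
begin

definition cpartial :: "'n::finite \<Rightarrow> (real^'n \<Rightarrow> real) \<Rightarrow> real^'n \<Rightarrow> real" where
  "cpartial i g x = frechet_derivative g (at x) (axis i 1)"

inductive_set iter_partials :: "(real^'n::finite \<Rightarrow> real) \<Rightarrow> (real^'n \<Rightarrow> real) set"
  for \<phi> where
  base: "\<phi> \<in> iter_partials \<phi>"
| step: "g \<in> iter_partials \<phi> \<Longrightarrow> cpartial i g \<in> iter_partials \<phi>"

definition test_fn :: "(real^'n::finite \<Rightarrow> real) \<Rightarrow> bool" where
  "test_fn \<phi> \<longleftrightarrow> (\<forall>g\<in>iter_partials \<phi>. \<forall>x. g differentiable (at x))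
      \<and> (\<exists>K. compact K \<and> (\<forall>x. x \<notin> K \<longrightarrow> \<phi> x = 0))"

definition locally_Lp :: "real \<Rightarrow> (real^'n::finite \<Rightarrow> real) \<Rightarrow> bool" where
  "locally_Lp p f \<longleftrightarrow> f \<in> borel_measurable lborel \<and>
      (\<forall>K. compact K \<longrightarrow> set_integrable lborel K (\<lambda>x. \<bar>f x\<bar> powr p))"

definition weak_partial :: "'n::finite \<Rightarrow> (real^'n \<Rightarrow> real) \<Rightarrow> (real^'n \<Rightarrow> real) \<Rightarrow> bool" where
  "weak_partial i f g \<longleftrightarrow> (\<forall>\<phi>. test_fn \<phi> \<longrightarrow>
      (\<integral>x. f x * cpartial i \<phi> x \<partial>lborel) = - (\<integral>x. g x * \<phi> x \<partial>lborel))"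

definition weak_second :: "'n::finite \<Rightarrow> 'n \<Rightarrow> (real^'n \<Rightarrow> real) \<Rightarrow> (real^'n \<Rightarrow> real) \<Rightarrow> bool" where
  "weak_second i j f h \<longleftrightarrow> (\<forall>\<phi>. test_fn \<phi> \<longrightarrow>
      (\<integral>x. f x * cpartial i (cpartial j \<phi>) x \<partial>lborel) = (\<integral>x. h x * \<phi> x \<partial>lborel))"

definition W2p_loc :: "real \<Rightarrow> (real^'n::finite \<Rightarrow> real) \<Rightarrow> bool" where
  "W2p_loc p f \<longleftrightarrow> locally_Lp p f \<and>
     (\<exists>g :: 'n \<Rightarrow> real^'n \<Rightarrow> real. \<exists>H :: 'n \<Rightarrow> 'n \<Rightarrow> real^'n \<Rightarrow> real.
        (\<forall>i. locally_Lp p (g i) \<and> weak_partial i f (g i)) \<and>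
        (\<forall>i j. locally_Lp p (H i j) \<and> weak_partial j (g i) (H i j)))"

definition f_alpha :: "real \<Rightarrow> real^'n::finite \<Rightarrow> real" where
  "f_alpha \<alpha> x = (if norm x \<le> 1 then norm x powr (1 + \<alpha>) + (\<alpha> - 1) / 2
                   else (1 + \<alpha>) / 2 * (norm x)\<^sup>2)"

definition hess_alpha :: "real \<Rightarrow> 'n::finite \<Rightarrow> 'n \<Rightarrow> real^'n \<Rightarrow> real" where
  "hess_alpha \<alpha> i j x = (if norm x < 1
      then (1 + \<alpha>) * (norm x powr (\<alpha> - 1) * (if i = j then 1 else 0)
                        + (\<alpha> - 1) * norm x powr (\<alpha> - 3) * (x $ i * x $ j))
      else (1 + \<alpha>) * (if i = j then 1 else 0))"

end

(*
  Away from the origin and the unit sphere f_alpha is smooth, with gradient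
  (1 + alpha) min(|x|, 1)^(alpha - 1) x and the stated Hessian; the two formulas for the
  gradient agree on the sphere, so f_alpha is C^1 off the origin. Such piecewise classical
  derivatives are weak derivatives as soon as the function is continuous on almost every
  coordinate line: on each line the exceptional set is finite, so the fundamental theorem of
  calculus still integrates the product rule, and Fubini averages over the lines. The
  gradient is continuous except at the origin when alpha = 0, and for n >= 2 almost every
  line misses the origin (for n = 1 the hypothesis forces alpha > 0).

  The Hessian is O(|x|^(alpha - 1)) near 0, and |x|^b is locally integrable for b > -n,
  as summing over the dyadic balls of radius 2^-k shows; so the Hessian lies in L^p_loc
  when (1 - alpha) p < n, which is what the hypothesis amounts to. Uniqueness of the weak
  Hessian is the fundamental lemma of the calculus of variations, proved with products over
  the coordinates of the bumps exp(-1/(m (t - l))) exp(-1/(m (u - t))), which converge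
  boundedly to the indicator of the box (l, u) as m grows.
*)
theory Submission
  imports Defs
begin

section \<open>Smooth functions of one variable\<close>

coinductive smooth_real :: "(real \<Rightarrow> real) \<Rightarrow> bool" where
  "\<forall>x. (f has_real_derivative f' x) (at x) \<Longrightarrow> smooth_real f' \<Longrightarrow> smooth_real f"

lemma smooth_real_has_real_derivative:
  assumes "smooth_real f"
  shows "(f has_real_derivative deriv f x) (at x)"
  using assms by cases (metis DERIV_imp_deriv)

lemma smooth_real_deriv:
  assumes "smooth_real f"
  shows "smooth_real (deriv f)"
  using assms by cases (metis DERIV_imp_deriv ext)

lemma smooth_real_affine:
  assumes "smooth_real f"
  shows "smooth_real (\<lambda>t. f (c * t + b))"
proof -
  have "smooth_real (\<lambda>t. k * g (c * t + b))" if "smooth_real g" for k g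
    using that
  proof (coinduction arbitrary: k g)
    case (smooth_real k g)
    have lin: "((\<lambda>t. c * t + b) has_real_derivative c) (at x)" for x
      by (auto intro!: derivative_eq_intros)
    have "((\<lambda>t. k * g (c * t + b)) has_real_derivative (k * c) * deriv g (c * x + b)) (at x)" for x
      using DERIV_cmult[OF DERIV_chain2[OF smooth_real_has_real_derivative[OF smooth_real] lin[of x]], where c=k]
      by (simp add: mult_ac)
    then show ?case
      using smooth_real_deriv[OF smooth_real]
      by (intro exI[of _ "\<lambda>t. k * g (c * t + b)"] exI[of _ "\<lambda>t. (k * c) * deriv g (c * t + b)"])
        blast
  qed
  from this[of f 1] assms show ?thesis by simp
qed

text \<open>The derivative of a product is a sum of products, so closure under products is
  shown for finite sums of products of smooth functions.\<close>

lemma smooth_real_mult: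
  assumes "smooth_real f" "smooth_real g"
  shows "smooth_real (\<lambda>t. f t * g t)"
proof -
  define F where "F L = (\<lambda>x. \<Sum>(a, b)\<leftarrow>L. a x * b x)" for L :: "((real \<Rightarrow> real) \<times> (real \<Rightarrow> real)) list"
  define D where "D L = concat (map (\<lambda>(a, b). [(deriv a, b), (a, deriv b)]) L)"
    for L :: "((real \<Rightarrow> real) \<times> (real \<Rightarrow> real)) list"
  let ?smooth2 = "\<lambda>L. \<forall>(a, b)\<in>set L. smooth_real a \<and> smooth_real b"
  have D_smooth: "?smooth2 L \<Longrightarrow> ?smooth2 (D L)" for L
    unfolding D_def by (induction L) (auto intro: smooth_real_deriv)
  have F_deriv: "?smooth2 L \<Longrightarrow> (F L has_real_derivative F (D L) x) (at x)" for L x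
  proof (induction L)
    case Nil
    then show ?case by (simp add: F_def D_def)
  next
    case (Cons p L)
    obtain a b where p: "p = (a, b)" by (cases p)
    have "((\<lambda>x. a x * b x + F L x) has_real_derivative deriv a x * b x + a x * deriv b x + F (D L) x) (at x)"
      using DERIV_add[OF DERIV_mult[OF smooth_real_has_real_derivative smooth_real_has_real_derivative] Cons.IH]
        Cons.prems p by (simp add: algebra_simps)
    then show ?case by (simp add: F_def D_def p add.assoc)
  qed
  have "smooth_real (F L)" if "?smooth2 L" for L
    using that
  proof (coinduction arbitrary: L)
    case (smooth_real L)
    then show ?case using F_deriv D_smooth by blast
  qed
  from this[of "[(f, g)]"] assms show ?thesis by (simp add: F_def)
qed

definition exp_neg_inverse :: "real \<Rightarrow> real" where
  "exp_neg_inverse s = (if 0 < s then exp (- inverse s) else 0)"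

lemma exp_neg_inverse_nonneg: "0 \<le> exp_neg_inverse s"
  and exp_neg_inverse_le_1: "exp_neg_inverse s \<le> 1"
  by (auto simp: exp_neg_inverse_def)

definition poly_exp_neg_inverse :: "real poly \<Rightarrow> real \<Rightarrow> real" where
  "poly_exp_neg_inverse P s = (if 0 < s then poly P (inverse s) * exp (- inverse s) else 0)"

lemma poly_div_exp_tendsto_0: "((\<lambda>t::real. poly P t / exp t) \<longlongrightarrow> 0) at_top"
proof -
  have "((\<lambda>t. \<Sum>i\<le>degree P. coeff P i * (t ^ i / exp t)) \<longlongrightarrow> (\<Sum>i\<le>degree P. coeff P i * 0)) at_top"
    by (intro tendsto_sum tendsto_mult tendsto_const tendsto_power_div_exp_0)
  then show ?thesis by (simp add: poly_altdef sum_divide_distrib)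
qed

lemma poly_exp_neg_inverse_tendsto_0: "(poly_exp_neg_inverse P \<longlongrightarrow> 0) (at_right 0)"
proof -
  have "(((\<lambda>t::real. poly P t / exp t) \<circ> inverse) \<longlongrightarrow> 0) (at_right (0::real))"
    using filterlim_compose[OF poly_div_exp_tendsto_0 filterlim_inverse_at_top_right] by (simp add: o_def)
  then show ?thesis
    by (rule Lim_transform_eventually)
      (auto simp: eventually_at_right_field poly_exp_neg_inverse_def exp_minus field_simps intro!: exI[of _ 1])
qed

text \<open>The difference quotient at 0 is again of the form \<open>poly_exp_neg_inverse\<close> on the right.\<close>

lemma poly_exp_neg_inverse_has_real_derivative_0:
  "(poly_exp_neg_inverse P has_real_derivative 0) (at 0)"
proof -
  have "((\<lambda>h. poly_exp_neg_inverse P h / h) \<longlongrightarrow> 0) (at 0)"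
    unfolding filterlim_at_split
  proof
    show "((\<lambda>h. poly_exp_neg_inverse P h / h) \<longlongrightarrow> 0) (at_left 0)"
      by (rule tendsto_eventually)
        (auto simp: eventually_at_left_field poly_exp_neg_inverse_def intro!: exI[of _ "-1"])
    show "((\<lambda>h. poly_exp_neg_inverse P h / h) \<longlongrightarrow> 0) (at_right 0)"
      using poly_exp_neg_inverse_tendsto_0[of "[:0, 1:] * P"]
      by (rule Lim_transform_eventually)
        (auto simp: eventually_at_right_field poly_exp_neg_inverse_def poly_mult divide_inverse
          intro!: exI[of _ 1])
  qed
  then show ?thesis
    by (simp add: DERIV_def poly_exp_neg_inverse_def)
qed

lemma poly_exp_neg_inverse_has_real_derivative:
  "(poly_exp_neg_inverse P has_real_derivative poly_exp_neg_inverse ([:0, 0, 1:] * (P - pderiv P)) x) (at x)"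
proof -
  consider "x < 0" | "x = 0" | "x > 0" by linarith
  then show ?thesis
  proof cases
    case 1
    have "((\<lambda>_. 0) has_real_derivative 0) (at x)" by simp
    then have "(poly_exp_neg_inverse P has_real_derivative 0) (at x)"
      by (rule has_field_derivative_transform_within_open[where S="{..<0}"])
        (use 1 in \<open>auto simp: poly_exp_neg_inverse_def\<close>)
    then show ?thesis
      using 1 by (simp add: poly_exp_neg_inverse_def)
  next
    case 2
    then show ?thesis
      using poly_exp_neg_inverse_has_real_derivative_0 by (simp add: poly_exp_neg_inverse_def)
  next
    case 3
    have inv: "(inverse has_real_derivative - (inverse x)\<^sup>2) (at x)"
      using 3 DERIV_inverse[of x] by (simp add: power2_eq_square)
    have "((\<lambda>s. poly P (inverse s) * exp (- inverse s)) has_real_derivative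
        poly (pderiv P) (inverse x) * (- (inverse x)\<^sup>2) * exp (- inverse x)
        + poly P (inverse x) * (exp (- inverse x) * (inverse x)\<^sup>2)) (at x)"
      using DERIV_mult[OF DERIV_chain2[OF poly_DERIV inv] DERIV_chain2[OF DERIV_exp DERIV_minus[OF inv]]]
      by (simp add: mult_ac)
    then have "(poly_exp_neg_inverse P has_real_derivative
        poly (pderiv P) (inverse x) * (- (inverse x)\<^sup>2) * exp (- inverse x)
        + poly P (inverse x) * (exp (- inverse x) * (inverse x)\<^sup>2)) (at x)"
      by (rule has_field_derivative_transform_within_open[where S="{0<..}"])
        (use 3 in \<open>auto simp: poly_exp_neg_inverse_def\<close>)
    then show ?thesis
      using 3 by (simp add: poly_exp_neg_inverse_def poly_mult poly_diff power2_eq_square algebra_simps)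
  qed
qed

lemma smooth_real_exp_neg_inverse: "smooth_real exp_neg_inverse"
proof -
  have "smooth_real (poly_exp_neg_inverse P)" for P
  proof (coinduction arbitrary: P)
    case smooth_real
    then show ?case using poly_exp_neg_inverse_has_real_derivative by blast
  qed
  moreover have "exp_neg_inverse = poly_exp_neg_inverse 1"
    by (auto simp: exp_neg_inverse_def poly_exp_neg_inverse_def)
  ultimately show ?thesis by metis
qed

section \<open>Test functions\<close>

lemma iter_partials_trans:
  assumes "g \<in> iter_partials \<psi>" "\<psi> \<in> iter_partials \<phi>"
  shows "g \<in> iter_partials \<phi>"
  using assms by (induction rule: iter_partials.induct) (auto intro: iter_partials.step)

lemma test_fn_has_derivative:
  assumes "test_fn \<phi>"
  shows "(\<phi> has_derivative frechet_derivative \<phi> (at x)) (at x)"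
  using assms iter_partials.base frechet_derivative_works unfolding test_fn_def by blast

lemma test_fn_continuous: "test_fn \<phi> \<Longrightarrow> continuous_on UNIV \<phi>"
  by (meson continuous_at_imp_continuous_on has_derivative_continuous test_fn_has_derivative)

lemma test_fn_cpartial:
  assumes "test_fn \<phi>"
  shows "test_fn (cpartial i \<phi>)"
  unfolding test_fn_def
proof safe
  fix g x assume "g \<in> iter_partials (cpartial i \<phi>)"
  then have "g \<in> iter_partials \<phi>"
    using iter_partials_trans iter_partials.step[OF iter_partials.base] by blast
  then show "g differentiable (at x)" using assms unfolding test_fn_def by blast
next
  obtain K where K: "compact K" "\<And>x. x \<notin> K \<Longrightarrow> \<phi> x = 0"
    using assms unfolding test_fn_def by blast
  have "cpartial i \<phi> x = 0" if "x \<notin> K" for x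
  proof -
    have "(\<phi> has_derivative (\<lambda>_. 0)) (at x)"
      by (rule has_derivative_transform_within_open[OF has_derivative_const, where s="- K"])
        (use K that compact_imp_closed in auto)
    then show ?thesis unfolding cpartial_def using frechet_derivative_at by metis
  qed
  then show "\<exists>K. compact K \<and> (\<forall>x. x \<notin> K \<longrightarrow> cpartial i \<phi> x = 0)"
    using K(1) by blast
qed

lemma locally_Lp_1_set_integrable:
  assumes "locally_Lp 1 F" "compact K"
  shows "set_integrable lborel K F"
proof -
  have F: "F \<in> borel_measurable lborel" using assms(1) unfolding locally_Lp_def by blast
  have "set_integrable lborel K (\<lambda>x. \<bar>F x\<bar>)"
    using assms unfolding locally_Lp_def by (simp add: powr_one')
  then show ?thesis
    using set_integrable_abs_iff'[OF F] assms(2) by (simp add: borel_compact)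
qed

lemma integrable_mult_test_fn:
  fixes F :: "real^'n::finite \<Rightarrow> real"
  assumes F: "locally_Lp 1 F" and \<phi>: "test_fn \<phi>"
  shows "integrable lborel (\<lambda>x. F x * \<phi> x)"
proof -
  obtain K where K: "compact K" "\<And>x. x \<notin> K \<Longrightarrow> \<phi> x = 0"
    using \<phi> unfolding test_fn_def by blast
  have "compact (\<phi> ` K)"
    using compact_continuous_image continuous_on_subset[OF test_fn_continuous[OF \<phi>]] K(1) by blast
  then obtain B where B: "\<And>x. x \<in> K \<Longrightarrow> \<bar>\<phi> x\<bar> \<le> B"
    using compact_imp_bounded bounded_iff by (metis image_eqI real_norm_def)
  show ?thesis
  proof (rule Bochner_Integration.integrable_bound)
    show "integrable lborel (\<lambda>x. B * (indicator K x *\<^sub>R F x))"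
      using locally_Lp_1_set_integrable[OF F K(1)] unfolding set_integrable_def by simp
    have "F \<in> borel_measurable lborel" "\<phi> \<in> borel_measurable lborel"
      using F borel_measurable_continuous_onI[OF test_fn_continuous[OF \<phi>]]
      unfolding locally_Lp_def by auto
    then show "(\<lambda>x. F x * \<phi> x) \<in> borel_measurable lborel" by measurable
    show "AE x in lborel. norm (F x * \<phi> x) \<le> norm (B * (indicator K x *\<^sub>R F x))"
    proof (rule AE_I2)
      fix x
      show "norm (F x * \<phi> x) \<le> norm (B * (indicator K x *\<^sub>R F x))"
      proof (cases "x \<in> K")
        case True
        then have "\<bar>F x\<bar> * \<bar>\<phi> x\<bar> \<le> \<bar>F x\<bar> * B" "0 \<le> B"
          using B[of x] by (auto intro: mult_left_mono)
        then show ?thesis using True by (simp add: abs_mult mult.commute)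
      qed (simp add: K(2))
    qed
  qed
qed

definition tensor_fun :: "('n::finite \<Rightarrow> real \<Rightarrow> real) \<Rightarrow> real^'n \<Rightarrow> real" where
  "tensor_fun \<gamma> x = (\<Prod>k\<in>UNIV. \<gamma> k (x $ k))"

lemma tensor_fun_has_derivative:
  assumes "\<And>k. smooth_real (\<gamma> k)"
  shows "(tensor_fun \<gamma> has_derivative
     (\<lambda>h. \<Sum>i\<in>UNIV. (deriv (\<gamma> i) (x $ i) * h $ i) * (\<Prod>j\<in>UNIV - {i}. \<gamma> j (x $ j)))) (at x)"
proof -
  have "((\<lambda>y. \<gamma> i (y $ i)) has_derivative (\<lambda>h. deriv (\<gamma> i) (x $ i) * h $ i)) (at x)" for i
  proof -
    have "(\<gamma> i has_derivative (\<lambda>t. deriv (\<gamma> i) (x $ i) * t)) (at (x $ i))"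
      using smooth_real_has_real_derivative[OF assms] by (simp add: has_field_derivative_def)
    from diff_chain_at[OF bounded_linear_imp_has_derivative[OF bounded_linear_vec_nth] this]
    show ?thesis by (simp add: o_def)
  qed
  then show ?thesis unfolding tensor_fun_def by (rule has_derivative_prod)
qed

lemma cpartial_tensor_fun:
  assumes "\<And>k. smooth_real (\<gamma> k)"
  shows "cpartial i (tensor_fun \<gamma>) = tensor_fun (\<gamma>(i := deriv (\<gamma> i)))"
proof
  fix x :: "real^'a"
  have "cpartial i (tensor_fun \<gamma>) x =
      (\<Sum>k\<in>UNIV. (deriv (\<gamma> k) (x $ k) * axis i 1 $ k) * (\<Prod>j\<in>UNIV - {k}. \<gamma> j (x $ j)))"
    unfolding cpartial_def
    using frechet_derivative_at[OF tensor_fun_has_derivative[OF assms, where x=x], symmetric] by simp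
  also have "\<dots> = deriv (\<gamma> i) (x $ i) * (\<Prod>j\<in>UNIV - {i}. \<gamma> j (x $ j))"
    by (simp add: axis_def if_distrib if_distribR sum.If_cases)
  also have "\<dots> = tensor_fun (\<gamma>(i := deriv (\<gamma> i))) x"
    unfolding tensor_fun_def by (subst prod.remove[of UNIV i]) (auto intro!: prod.cong)
  finally show "cpartial i (tensor_fun \<gamma>) x = tensor_fun (\<gamma>(i := deriv (\<gamma> i))) x" .
qed

lemma iter_partials_tensor_fun:
  assumes "g \<in> iter_partials (tensor_fun \<gamma>)" "\<And>k. smooth_real (\<gamma> k)"
  shows "\<exists>\<gamma>'. (\<forall>k. smooth_real (\<gamma>' k)) \<and> g = tensor_fun \<gamma>'"
  using assms(1)
proof (induction rule: iter_partials.induct)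
  case base
  then show ?case using assms(2) by blast
next
  case (step g i)
  then obtain \<gamma>' where \<gamma>': "\<forall>k. smooth_real (\<gamma>' k)" "g = tensor_fun \<gamma>'" by blast
  then have "cpartial i g = tensor_fun (\<gamma>'(i := deriv (\<gamma>' i)))"
    using cpartial_tensor_fun by blast
  moreover have "\<forall>k. smooth_real ((\<gamma>'(i := deriv (\<gamma>' i))) k)"
    using \<gamma>'(1) smooth_real_deriv by auto
  ultimately show ?case by blast
qed

lemma test_fn_tensor_fun:
  fixes l u :: "real^'n::finite"
  assumes "\<And>k. smooth_real (\<gamma> k)" "\<And>k t. t \<notin> {l $ k..u $ k} \<Longrightarrow> \<gamma> k t = 0"
  shows "test_fn (tensor_fun \<gamma>)"
  unfolding test_fn_def
proof safe
  fix g x assume "g \<in> iter_partials (tensor_fun \<gamma>)"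
  then obtain \<gamma>' where "\<forall>k. smooth_real (\<gamma>' k)" "g = tensor_fun \<gamma>'"
    using iter_partials_tensor_fun assms(1) by blast
  then show "g differentiable (at x)"
    using tensor_fun_has_derivative differentiable_def by blast
next
  have "tensor_fun \<gamma> x = 0" if "x \<notin> cbox l u" for x
  proof -
    obtain k where "x $ k \<notin> {l $ k..u $ k}"
      using \<open>x \<notin> cbox l u\<close> unfolding mem_box_cart by auto
    then show ?thesis
      unfolding tensor_fun_def using assms(2) by (intro prod_zero) auto
  qed
  then show "\<exists>K. compact K \<and> (\<forall>x. x \<notin> K \<longrightarrow> tensor_fun \<gamma> x = 0)"
    using compact_cbox by blast
qed

section \<open>The fundamental lemma of the calculus of variations\<close>

definition bump_interval :: "real \<Rightarrow> real \<Rightarrow> nat \<Rightarrow> real \<Rightarrow> real" where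
  "bump_interval l u m t = exp_neg_inverse ((real m + 1) * (t - l)) * exp_neg_inverse ((real m + 1) * (u - t))"

lemma smooth_real_bump_interval: "smooth_real (bump_interval l u m)"
proof -
  have "smooth_real (\<lambda>t. exp_neg_inverse ((real m + 1) * t + - (real m + 1) * l) *
                     exp_neg_inverse (- (real m + 1) * t + (real m + 1) * u))"
    by (intro smooth_real_mult smooth_real_affine smooth_real_exp_neg_inverse)
  moreover have "bump_interval l u m = (\<lambda>t. exp_neg_inverse ((real m + 1) * t + - (real m + 1) * l) *
                     exp_neg_inverse (- (real m + 1) * t + (real m + 1) * u))"
    by (auto simp: bump_interval_def fun_eq_iff algebra_simps)
  ultimately show ?thesis by simp
qed

lemma bump_interval_nonneg: "0 \<le> bump_interval l u m t"
  and bump_interval_le_1: "bump_interval l u m t \<le> 1"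
  unfolding bump_interval_def using exp_neg_inverse_nonneg exp_neg_inverse_le_1
  by (auto intro: mult_le_one)

lemma bump_interval_eq_0: "t \<notin> {l<..<u} \<Longrightarrow> bump_interval l u m t = 0"
  by (auto simp: bump_interval_def exp_neg_inverse_def zero_less_mult_iff)

lemma bump_interval_tendsto_indicator: "(\<lambda>m. bump_interval l u m t) \<longlonglongrightarrow> indicator {l<..<u} t"
proof (cases "t \<in> {l<..<u}")
  case True
  have "(\<lambda>m. exp_neg_inverse ((real m + 1) * a)) \<longlonglongrightarrow> 1" if "0 < a" for a
  proof -
    have "(\<lambda>m. exp (- (inverse (real (Suc m)) * inverse a))) \<longlonglongrightarrow> exp (- (0 * inverse a))"
      by (intro tendsto_exp tendsto_minus tendsto_mult LIMSEQ_inverse_real_of_nat tendsto_const)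
    then show ?thesis
      using that by (simp add: exp_neg_inverse_def add_pos_nonneg mult.commute add.commute)
  qed
  then have "(\<lambda>m. bump_interval l u m t) \<longlonglongrightarrow> 1 * 1"
    unfolding bump_interval_def using True by (intro tendsto_mult) auto
  then show ?thesis using True by simp
qed (simp add: bump_interval_eq_0)

definition bump_box :: "real^'n::finite \<Rightarrow> real^'n \<Rightarrow> nat \<Rightarrow> real^'n \<Rightarrow> real" where
  "bump_box l u m = tensor_fun (\<lambda>k. bump_interval (l $ k) (u $ k) m)"

lemma test_fn_bump_box: "test_fn (bump_box l u m)"
  unfolding bump_box_def
  by (rule test_fn_tensor_fun[where l=l and u=u]) (auto simp: smooth_real_bump_interval bump_interval_eq_0)

lemma bump_box_nonneg: "0 \<le> bump_box l u m x"
  and bump_box_le_1: "bump_box l u m x \<le> 1"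
  unfolding bump_box_def tensor_fun_def
  by (auto intro!: prod_nonneg prod_le_1 simp: bump_interval_nonneg bump_interval_le_1)

lemma bump_box_eq_0:
  assumes "x \<notin> box l u"
  shows "bump_box l u m x = 0"
proof -
  obtain k where "x $ k \<notin> {l $ k<..<u $ k}"
    using assms unfolding mem_box_cart by auto
  then show ?thesis
    unfolding bump_box_def tensor_fun_def by (intro prod_zero) (auto intro!: bump_interval_eq_0)
qed

lemma bump_box_tendsto_indicator: "(\<lambda>m. bump_box l u m x) \<longlonglongrightarrow> indicator (box l u) x"
proof -
  have "(\<lambda>m. bump_box l u m x) \<longlonglongrightarrow> (\<Prod>k\<in>UNIV. indicator {l $ k<..<u $ k} (x $ k))"
    unfolding bump_box_def tensor_fun_def by (intro tendsto_prod bump_interval_tendsto_indicator)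
  moreover have "(\<Prod>k\<in>UNIV. indicator {l $ k<..<u $ k} (x $ k) :: real) = indicator (box l u) x"
  proof (cases "x \<in> box l u")
    case False
    then obtain k where "x $ k \<notin> {l $ k<..<u $ k}"
      unfolding mem_box_cart by auto
    then have "(\<Prod>k\<in>UNIV. indicator {l $ k<..<u $ k} (x $ k) :: real) = 0"
      by (intro prod_zero bexI[of _ k]) auto
    with False show ?thesis by simp
  qed (simp add: mem_box_cart)
  ultimately show ?thesis by simp
qed

lemma set_integral_box_eq_0:
  fixes d :: "real^'n::finite \<Rightarrow> real"
  assumes d: "locally_Lp 1 d" and orth: "\<And>\<phi>. test_fn \<phi> \<Longrightarrow> (\<integral>x. d x * \<phi> x \<partial>lborel) = 0"
  shows "(LINT x:box l u|lborel. d x) = 0"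
proof -
  have [measurable]: "d \<in> borel_measurable lborel" using d unfolding locally_Lp_def by blast
  have [measurable]: "bump_box l u m \<in> borel_measurable lborel" for m
    using borel_measurable_continuous_onI[OF test_fn_continuous[OF test_fn_bump_box]] by simp
  have "(\<lambda>m. \<integral>x. d x * bump_box l u m x \<partial>lborel) \<longlonglongrightarrow> (\<integral>x. indicator (box l u) x *\<^sub>R d x \<partial>lborel)"
  proof (rule integral_dominated_convergence[where w="\<lambda>x. norm (indicator (cbox l u) x *\<^sub>R d x)"])
    show "integrable lborel (\<lambda>x. norm (indicator (cbox l u) x *\<^sub>R d x))"
      using locally_Lp_1_set_integrable[OF d compact_cbox] unfolding set_integrable_def by simp
    show "AE x in lborel. (\<lambda>m. d x * bump_box l u m x) \<longlonglongrightarrow> indicator (box l u) x *\<^sub>R d x"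
      by (rule AE_I2)
        (use tendsto_mult[OF tendsto_const bump_box_tendsto_indicator] in \<open>simp add: mult.commute\<close>)
    show "AE x in lborel. norm (d x * bump_box l u m x) \<le> norm (indicator (cbox l u) x *\<^sub>R d x)" for m
    proof (rule AE_I2)
      fix x
      show "norm (d x * bump_box l u m x) \<le> norm (indicator (cbox l u) x *\<^sub>R d x)"
      proof (cases "x \<in> box l u")
        case True
        have "\<bar>d x\<bar> * \<bar>bump_box l u m x\<bar> \<le> \<bar>d x\<bar> * 1"
          using bump_box_nonneg[of l u m x] bump_box_le_1[of l u m x] by (intro mult_left_mono) auto
        moreover have "x \<in> cbox l u" using True box_subset_cbox by blast
        ultimately show ?thesis by (simp add: abs_mult)
      qed (simp add: bump_box_eq_0)
    qed
  qed simp_all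
  moreover have "(\<integral>x. d x * bump_box l u m x \<partial>lborel) = 0" for m
    using orth[OF test_fn_bump_box] .
  ultimately have "(\<lambda>m. 0) \<longlonglongrightarrow> (\<integral>x. indicator (box l u) x *\<^sub>R d x \<partial>lborel)"
    by simp
  from LIMSEQ_unique[OF this tendsto_const] show ?thesis
    unfolding set_lebesgue_integral_def by simp
qed

text \<open>Dynkin's \<open>\<pi>\<close>-\<open>\<lambda>\<close> argument: the open boxes form an intersection-stable generator
  of the Borel sets.\<close>

lemma set_integral_Int_box_eq_0:
  fixes d :: "real^'n::finite \<Rightarrow> real"
  assumes d: "locally_Lp 1 d" and orth: "\<And>\<phi>. test_fn \<phi> \<Longrightarrow> (\<integral>x. d x * \<phi> x \<partial>lborel) = 0"
    and A: "A \<in> sets lborel"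
  shows "(LINT x:(A \<inter> box a b)|lborel. d x) = 0"
proof -
  have int_box: "set_integrable lborel (box a b) d"
    by (rule set_integrable_subset[OF locally_Lp_1_set_integrable[OF d compact_cbox[of a b]]])
      (auto simp: box_subset_cbox)
  have "Int_stable (range (\<lambda>(a, b). box a b :: (real^'n) set))"
    by (auto simp: Int_stable_def box_Int_box)
  moreover have "range (\<lambda>(a, b). box a b :: (real^'n) set) \<subseteq> Pow UNIV"
    by auto
  moreover have "A \<in> sigma_sets UNIV (range (\<lambda>(a, b). box a b :: (real^'n) set))"
    using A unfolding sets_lborel borel_eq_box by simp
  ultimately show ?thesis
  proof (induction rule: sigma_sets_induct_disjoint)
    case (basic A)
    then obtain l u where "A = box l u" by auto
    then show ?case
      using set_integral_box_eq_0[OF d orth] by (simp add: box_Int_box)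
  next
    case empty
    then show ?case by (simp add: set_lebesgue_integral_def)
  next
    case (compl A)
    have [measurable]: "A \<in> sets lborel"
      using compl(1) unfolding sets_lborel borel_eq_box by simp
    have "(LINT x:((UNIV - A) \<inter> box a b)|lborel. d x) + (LINT x:(A \<inter> box a b)|lborel. d x)
        = (LINT x:(((UNIV - A) \<inter> box a b) \<union> (A \<inter> box a b))|lborel. d x)"
      by (rule set_integral_Un[symmetric]) (auto intro: set_integrable_subset[OF int_box])
    also have "((UNIV - A) \<inter> box a b) \<union> (A \<inter> box a b) = box a b"
      by auto
    finally show ?case
      using compl(2) set_integral_box_eq_0[OF d orth] by simp
  next
    case (union F)
    have [measurable]: "F i \<in> sets lborel" for i
      using union(2) unfolding sets_lborel borel_eq_box by auto
    have "(LINT x:(\<Union>i. F i \<inter> box a b)|lborel. d x) = (\<Sum>i. (LINT x:(F i \<inter> box a b)|lborel. d x))"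
      using union(1) unfolding disjoint_family_on_def
      by (intro lebesgue_integral_countable_add set_integrable_subset[OF int_box]) auto
    then show ?case using union(3) by simp
  qed
qed

lemma fundamental_lemma_calculus_of_variations:
  fixes d :: "real^'n::finite \<Rightarrow> real"
  assumes d: "locally_Lp 1 d" and orth: "\<And>\<phi>. test_fn \<phi> \<Longrightarrow> (\<integral>x. d x * \<phi> x \<partial>lborel) = 0"
  shows "AE x in lborel. d x = 0"
proof -
  have AE_box: "AE x in lborel. indicator (box a b) x * d x = 0" for a b :: "real^'n"
  proof (rule sigma_finite_measure.density_zero[OF sigma_finite_lborel])
    show "integrable lborel (\<lambda>x. indicator (box a b) x * d x)"
      using set_integrable_subset[OF locally_Lp_1_set_integrable[OF d compact_cbox[of a b]], of "box a b"]
      by (simp add: box_subset_cbox set_integrable_def)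
    show "(LINT x:A|lborel. indicator (box a b) x * d x) = 0" if "A \<in> sets lborel" for A
      using set_integral_Int_box_eq_0[OF d orth that, of a b]
      by (simp add: set_lebesgue_integral_def indicator_inter_arith mult.assoc)
  qed
  define c :: "nat \<Rightarrow> real^'n" where "c N = (\<chi> k. real N)" for N
  have "AE x in lborel. \<forall>N. indicator (box (- c N) (c N)) x * d x = 0"
    by (subst AE_all_countable) (intro allI AE_box)
  then show ?thesis
  proof (rule eventually_mono)
    fix x :: "real^'n" assume x: "\<forall>N. indicator (box (- c N) (c N)) x * d x = 0"
    obtain N where N: "norm x < real N" using reals_Archimedean2 by blast
    have "x \<in> box (- c N) (c N)"
      unfolding mem_box_cart
    proof
      fix k
      have "\<bar>x $ k\<bar> < real N" using component_le_norm_cart[of x k] N by linarith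
      then show "(- c N) $ k < x $ k \<and> x $ k < c N $ k" unfolding c_def by auto
    qed
    then show "d x = 0" using x[rule_format, of N] by simp
  qed
qed

lemma weak_second_if_weak_partials:
  fixes f g h :: "real^'n::finite \<Rightarrow> real"
  assumes "weak_partial i f g" "weak_partial j g h"
  shows "weak_second i j f h"
  unfolding weak_second_def
proof (intro allI impI)
  fix \<phi> :: "real^'n \<Rightarrow> real" assume \<phi>: "test_fn \<phi>"
  have "(\<integral>x. f x * cpartial i (cpartial j \<phi>) x \<partial>lborel) = - (\<integral>x. g x * cpartial j \<phi> x \<partial>lborel)"
    using assms(1) test_fn_cpartial[OF \<phi>] unfolding weak_partial_def by blast
  also have "\<dots> = (\<integral>x. h x * \<phi> x \<partial>lborel)"
    using assms(2) \<phi> unfolding weak_partial_def by simp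
  finally show "(\<integral>x. f x * cpartial i (cpartial j \<phi>) x \<partial>lborel) = (\<integral>x. h x * \<phi> x \<partial>lborel)" .
qed

lemma locally_Lp_1_diff:
  assumes "locally_Lp 1 f" "locally_Lp 1 g"
  shows "locally_Lp 1 (\<lambda>x. f x - g x)"
  unfolding locally_Lp_def
proof (intro conjI allI impI)
  show "(\<lambda>x. f x - g x) \<in> borel_measurable lborel"
    using assms unfolding locally_Lp_def by auto
  fix K :: "(real^'a) set" assume "compact K"
  then have "set_integrable lborel K (\<lambda>x. f x - g x)"
    using locally_Lp_1_set_integrable assms by (intro set_integral_diff(1))
  then show "set_integrable lborel K (\<lambda>x. \<bar>f x - g x\<bar> powr 1)"
    by (simp add: powr_one' set_integrable_abs)
qed

lemma weak_second_unique:
  fixes h h' :: "real^'n::finite \<Rightarrow> real"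
  assumes "locally_Lp 1 h" "locally_Lp 1 h'" "weak_second i j f h" "weak_second i j f h'"
  shows "AE x in lborel. h x = h' x"
proof -
  have "AE x in lborel. h x - h' x = 0"
  proof (rule fundamental_lemma_calculus_of_variations[OF locally_Lp_1_diff[OF assms(1,2)]])
    fix \<phi> :: "real^'n \<Rightarrow> real" assume \<phi>: "test_fn \<phi>"
    have "(\<integral>x. (h x - h' x) * \<phi> x \<partial>lborel) = (\<integral>x. h x * \<phi> x \<partial>lborel) - (\<integral>x. h' x * \<phi> x \<partial>lborel)"
      using integrable_mult_test_fn[OF assms(1) \<phi>] integrable_mult_test_fn[OF assms(2) \<phi>]
      by (simp add: left_diff_distrib)
    also have "\<dots> = 0"
      using assms(3,4) \<phi> unfolding weak_second_def by simp
    finally show "(\<integral>x. (h x - h' x) * \<phi> x \<partial>lborel) = 0" .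
  qed
  then show ?thesis by simp
qed

section \<open>Weak derivatives from piecewise classical ones\<close>

lemma lborel_integral_translate:
  fixes f :: "'a::euclidean_space \<Rightarrow> real"
  assumes [measurable]: "f \<in> borel_measurable borel"
  shows "(\<integral>x. f (x + c) \<partial>lborel) = (\<integral>x. f x \<partial>lborel)"
proof -
  have "(\<integral>x. f x \<partial>lborel) = (\<integral>x. f x \<partial>distr lborel borel ((+) c))"
    by (simp add: lborel_distr_plus)
  also have "\<dots> = (\<integral>x. f (x + c) \<partial>lborel)"
    by (subst integral_distr) (auto simp: add.commute)
  finally show ?thesis by simp
qed

lemma lborel_integrable_translate_iff:
  fixes f :: "'a::euclidean_space \<Rightarrow> real"
  assumes [measurable]: "f \<in> borel_measurable borel"
  shows "integrable lborel (\<lambda>x. f (x + c)) \<longleftrightarrow> integrable lborel f"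
proof -
  have "integrable lborel f \<longleftrightarrow> integrable (distr lborel borel ((+) c)) f"
    by (simp add: lborel_distr_plus)
  also have "\<dots> \<longleftrightarrow> integrable lborel (\<lambda>x. f (x + c))"
    by (subst integrable_distr_eq) (auto simp: add.commute)
  finally show ?thesis by simp
qed

lemma lborel_nn_integral_translate:
  fixes f :: "'a::euclidean_space \<Rightarrow> ennreal"
  assumes [measurable]: "f \<in> borel_measurable borel"
  shows "(\<integral>\<^sup>+x. f (x + c) \<partial>lborel) = (\<integral>\<^sup>+x. f x \<partial>lborel)"
proof -
  have "(\<integral>\<^sup>+x. f x \<partial>lborel) = (\<integral>\<^sup>+x. f x \<partial>distr lborel borel ((+) c))"
    by (simp add: lborel_distr_plus)
  also have "\<dots> = (\<integral>\<^sup>+x. f (x + c) \<partial>lborel)"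
    by (subst nn_integral_distr) (auto simp: add.commute)
  finally show ?thesis by simp
qed

lemma integrable_segment_translates:
  fixes D :: "'a::euclidean_space \<Rightarrow> real"
  assumes D: "integrable lborel D"
  shows "integrable (lborel \<Otimes>\<^sub>M lborel) (\<lambda>(x, t). indicator {0..1::real} t * D (x + t *\<^sub>R e))"
    (is "integrable _ ?w")
proof -
  have [measurable]: "D \<in> borel_measurable borel" using D by simp
  have translate: "(\<integral>\<^sup>+x. ennreal \<bar>D (x + c)\<bar> \<partial>lborel) = (\<integral>\<^sup>+x. ennreal \<bar>D x\<bar> \<partial>lborel)" for c
    by (rule lborel_nn_integral_translate[of "\<lambda>x. ennreal \<bar>D x\<bar>"]) measurable
  have "(\<integral>\<^sup>+p. ennreal (norm (?w p)) \<partial>(lborel \<Otimes>\<^sub>M lborel))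
      = (\<integral>\<^sup>+t. \<integral>\<^sup>+x. indicator {0..1::real} t * ennreal (norm (D (x + t *\<^sub>R e))) \<partial>lborel \<partial>lborel)"
    by (subst lborel_pair.nn_integral_snd[symmetric]) (auto intro!: nn_integral_cong simp: indicator_def)
  also have "\<dots> = (\<integral>\<^sup>+t. indicator {0..1::real} t * (\<integral>\<^sup>+x. ennreal (norm (D x)) \<partial>lborel) \<partial>lborel)"
    by (simp add: nn_integral_cmult translate)
  also have "\<dots> = (\<integral>\<^sup>+x. ennreal (norm (D x)) \<partial>lborel)"
    by (subst mult.commute) (simp add: nn_integral_cmult_indicator)
  also have "\<dots> < \<infinity>"
    using D by (simp add: integrable_iff_bounded)
  finally show ?thesis
    by (simp add: integrable_iff_bounded)
qed

text \<open>Fubini turns \<open>\<integral> D\<close> into the average over \<open>t \<in> [0, 1]\<close> of the translates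
  \<open>\<integral> D (x + t e) dx\<close>, and the inner segment integrals telescope to
  \<open>\<integral> u (x + e) - u x dx = 0\<close>.\<close>

lemma lborel_integral_eq_0_if_FTC_on_segments:
  fixes u D :: "'a::euclidean_space \<Rightarrow> real"
  assumes u: "integrable lborel u" and D: "integrable lborel D"
    and ftc: "AE x in lborel. ((\<lambda>t. D (x + t *\<^sub>R e)) has_integral (u (x + e) - u x)) {0..1}"
  shows "(\<integral>x. D x \<partial>lborel) = 0"
proof -
  have [measurable]: "D \<in> borel_measurable borel" "u \<in> borel_measurable borel"
    using u D by simp_all
  define w where "w = (\<lambda>(x::'a, t::real). indicator {0..1} t * D (x + t *\<^sub>R e))"
  have w: "integrable (lborel \<Otimes>\<^sub>M lborel) w"
    unfolding w_def by (rule integrable_segment_translates[OF D])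
  have "(\<integral>x. D x \<partial>lborel) = (\<integral>t. indicator {0..1::real} t * (\<integral>x. D x \<partial>lborel) \<partial>lborel)"
    by (simp add: mult.commute)
  also have "\<dots> = (\<integral>t. \<integral>x. w (x, t) \<partial>lborel \<partial>lborel)"
    by (simp add: w_def lborel_integral_translate[of D])
  also have "\<dots> = (\<integral>x. \<integral>t. w (x, t) \<partial>lborel \<partial>lborel)"
    using lborel_pair.Fubini_integral[of "\<lambda>x t. w (x, t)"] w by simp
  also have "\<dots> = (\<integral>x. u (x + e) - u x \<partial>lborel)"
  proof (rule integral_cong_AE)
    show "(\<lambda>x. \<integral>t. w (x, t) \<partial>lborel) \<in> borel_measurable lborel"
      using w by measurable
    have "AE x in lborel. integrable lborel (\<lambda>t. w (x, t))"
      using lborel_pair.AE_integrable_fst'[OF w] .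
    then show "AE x in lborel. (\<integral>t. w (x, t) \<partial>lborel) = u (x + e) - u x"
      using ftc
    proof eventually_elim
      case (elim x)
      have int: "set_integrable lborel {0..1} (\<lambda>t. D (x + t *\<^sub>R e))"
        using elim(1) unfolding set_integrable_def w_def by simp
      have "(\<integral>t. w (x, t) \<partial>lborel) = integral {0..1} (\<lambda>t. D (x + t *\<^sub>R e))"
        using set_borel_integral_eq_integral(2)[OF int] unfolding set_lebesgue_integral_def w_def by simp
      also have "\<dots> = u (x + e) - u x"
        using elim(2) by (rule integral_unique)
      finally show ?case .
    qed
  qed simp
  also have "\<dots> = 0"
    using u lborel_integrable_translate_iff[of u e] lborel_integral_translate[of u e] by simp
  finally show ?thesis .
qed

lemma finite_line_Int_sphere:
  fixes x v :: "'a::real_inner"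
  assumes "v \<noteq> 0"
  shows "finite {t::real. norm (x + t *\<^sub>R v) = r}"
proof -
  define p where "p = [: x \<bullet> x - r\<^sup>2, 2 * (x \<bullet> v), v \<bullet> v :]"
  have "p \<noteq> 0" using assms unfolding p_def by simp
  have "poly p t = 0" if "norm (x + t *\<^sub>R v) = r" for t
  proof -
    from that have "(x + t *\<^sub>R v) \<bullet> (x + t *\<^sub>R v) = r\<^sup>2"
      by (metis power2_norm_eq_inner)
    then show "poly p t = 0"
      unfolding p_def by (simp add: inner_add_left inner_add_right inner_commute algebra_simps power2_eq_square)
  qed
  then have "{t::real. norm (x + t *\<^sub>R v) = r} \<subseteq> {t. poly p t = 0}"
    by blast
  then show ?thesis using poly_roots_finite[OF \<open>p \<noteq> 0\<close>] finite_subset by blast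
qed

lemma AE_axis_line_avoids_0:
  fixes i :: "'n::finite"
  assumes "CARD('n) \<ge> 2"
  shows "AE x::real^'n in lborel. \<forall>t::real. x + t *\<^sub>R axis i 1 \<noteq> 0"
proof -
  obtain k :: 'n where "k \<noteq> i"
  proof -
    have "\<not> (UNIV :: 'n set) \<subseteq> {i}"
      using assms card_mono[of "{i}" "UNIV :: 'n set"] by auto
    then show ?thesis using that by blast
  qed
  have "negligible {x::real^'n. x $ k = 0}"
    by (rule negligible_standard_hyperplane_cart)
  moreover have "closed {x::real^'n. x $ k = 0}"
    by (intro closed_Collect_eq continuous_intros)
  ultimately have "{x::real^'n. x $ k = 0} \<in> null_sets lborel"
    by (simp add: negligible_iff_null_sets null_sets_completion_iff borel_closed)
  then have "AE x in lborel. x \<notin> {x::real^'n. x $ k = 0}"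
    by (rule AE_not_in)
  then show ?thesis
  proof (rule eventually_mono, intro allI)
    fix x :: "real^'n" and t :: real
    assume "x \<notin> {x. x $ k = 0}"
    then have "(x + t *\<^sub>R axis i 1) $ k \<noteq> 0" using \<open>k \<noteq> i\<close> by (simp add: axis_def)
    then show "x + t *\<^sub>R axis i 1 \<noteq> 0" by (metis zero_index)
  qed
qed

lemma has_real_derivative_along_axis:
  assumes "g differentiable (at (x + t *\<^sub>R axis i 1))"
  shows "((\<lambda>s. g (x + s *\<^sub>R axis i 1)) has_real_derivative cpartial i g (x + t *\<^sub>R axis i 1)) (at t)"
proof -
  let ?y = "x + t *\<^sub>R axis i 1" and ?g' = "frechet_derivative g (at (x + t *\<^sub>R axis i 1))"
  have "((\<lambda>s. x + s *\<^sub>R axis i 1) has_derivative (\<lambda>s. s *\<^sub>R axis i 1)) (at t)"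
    by (auto intro!: derivative_eq_intros)
  from diff_chain_at[OF this frechet_derivative_works[THEN iffD1, OF assms]]
  have "((\<lambda>s. g (x + s *\<^sub>R axis i 1)) has_derivative (\<lambda>s. ?g' (s *\<^sub>R axis i 1))) (at t)"
    by (simp add: o_def)
  moreover have "?g' (s *\<^sub>R axis i 1) = cpartial i g ?y * s" for s
    using linear.scaleR[OF has_derivative_linear[OF frechet_derivative_works[THEN iffD1, OF assms]]]
    by (simp add: cpartial_def)
  ultimately show ?thesis
    by (simp add: has_field_derivative_def)
qed

text \<open>The fundamental theorem of calculus tolerates the finitely many points of the line where
  \<open>F\<close> is not differentiable.\<close>

lemma has_integral_product_rule_axis_segment:
  fixes F G \<phi> :: "real^'n::finite \<Rightarrow> real"
  assumes \<phi>: "test_fn \<phi>"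
    and cont: "\<And>t. isCont F (x + t *\<^sub>R axis i 1)"
    and fin: "finite {t. x + t *\<^sub>R axis i 1 \<in> Z}"
    and der: "\<And>y. y \<notin> Z \<Longrightarrow> F differentiable (at y) \<and> cpartial i F y = G y"
  shows "((\<lambda>t. F (x + t *\<^sub>R axis i 1) * cpartial i \<phi> (x + t *\<^sub>R axis i 1)
              + G (x + t *\<^sub>R axis i 1) * \<phi> (x + t *\<^sub>R axis i 1))
          has_integral F (x + axis i 1) * \<phi> (x + axis i 1) - F x * \<phi> x) {0..1}"
proof -
  let ?u = "\<lambda>s. F (x + s *\<^sub>R axis i 1) * \<phi> (x + s *\<^sub>R axis i 1)"
  have "((\<lambda>t. F (x + t *\<^sub>R axis i 1) * cpartial i \<phi> (x + t *\<^sub>R axis i 1)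
              + G (x + t *\<^sub>R axis i 1) * \<phi> (x + t *\<^sub>R axis i 1)) has_integral ?u 1 - ?u 0) {0..1}"
  proof (rule fundamental_theorem_of_calculus_interior_strong[OF fin])
    fix t assume "t \<in> {0<..<1} - {t. x + t *\<^sub>R axis i 1 \<in> Z}"
    then have F: "F differentiable (at (x + t *\<^sub>R axis i 1))"
      and G: "cpartial i F (x + t *\<^sub>R axis i 1) = G (x + t *\<^sub>R axis i 1)"
      using der by auto
    have "\<phi> differentiable (at (x + t *\<^sub>R axis i 1))"
      using test_fn_has_derivative[OF \<phi>] differentiable_def by blast
    from DERIV_mult'[OF has_real_derivative_along_axis[OF F] has_real_derivative_along_axis[OF this]]
    show "(?u has_vector_derivative F (x + t *\<^sub>R axis i 1) * cpartial i \<phi> (x + t *\<^sub>R axis i 1)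
              + G (x + t *\<^sub>R axis i 1) * \<phi> (x + t *\<^sub>R axis i 1)) (at t)"
      by (simp add: G has_real_derivative_iff_has_vector_derivative)
  next
    have line: "isCont (\<lambda>s::real. x + s *\<^sub>R axis i 1) t" for t
      by (intro continuous_intros)
    have "isCont \<phi> y" for y
      using test_fn_continuous[OF \<phi>] by (simp add: continuous_on_eq_continuous_at)
    then have "isCont ?u t" for t
      by (intro isCont_mult isCont_o2[OF line cont] isCont_o2[OF line])
    then show "continuous_on {0..1} ?u"
      by (simp add: continuous_at_imp_continuous_on)
  qed simp
  then show ?thesis by simp
qed

lemma weak_partial_if_differentiable_off:
  fixes F G :: "real^'n::finite \<Rightarrow> real"
  assumes LF: "locally_Lp 1 F" and LG: "locally_Lp 1 G"
    and cont: "AE x in lborel. \<forall>t. isCont F (x + t *\<^sub>R axis i 1)"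
    and fin: "\<And>x. finite {t. x + t *\<^sub>R axis i 1 \<in> Z}"
    and der: "\<And>y. y \<notin> Z \<Longrightarrow> F differentiable (at y) \<and> cpartial i F y = G y"
  shows "weak_partial i F G"
  unfolding weak_partial_def
proof (intro allI impI)
  fix \<phi> :: "real^'n \<Rightarrow> real" assume \<phi>: "test_fn \<phi>"
  have G\<phi>: "integrable lborel (\<lambda>x. G x * \<phi> x)"
    by (rule integrable_mult_test_fn[OF LG \<phi>])
  have F\<phi>': "integrable lborel (\<lambda>x. F x * cpartial i \<phi> x)"
    by (rule integrable_mult_test_fn[OF LF test_fn_cpartial[OF \<phi>]])
  have "(\<integral>x. F x * cpartial i \<phi> x + G x * \<phi> x \<partial>lborel) = 0"
  proof (rule lborel_integral_eq_0_if_FTC_on_segments)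
    show "integrable lborel (\<lambda>x. F x * \<phi> x)"
      by (rule integrable_mult_test_fn[OF LF \<phi>])
    show "integrable lborel (\<lambda>x. F x * cpartial i \<phi> x + G x * \<phi> x)"
      using G\<phi> F\<phi>' by simp
    show "AE x in lborel. ((\<lambda>t. F (x + t *\<^sub>R axis i 1) * cpartial i \<phi> (x + t *\<^sub>R axis i 1)
              + G (x + t *\<^sub>R axis i 1) * \<phi> (x + t *\<^sub>R axis i 1))
          has_integral F (x + axis i 1) * \<phi> (x + axis i 1) - F x * \<phi> x) {0..1}"
      using cont
    proof eventually_elim
      case (elim x)
      then show ?case by (intro has_integral_product_rule_axis_segment[OF \<phi> _ fin der]) simp
    qed
  qed
  then show "(\<integral>x. F x * cpartial i \<phi> x \<partial>lborel) = - (\<integral>x. G x * \<phi> x \<partial>lborel)"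
    using G\<phi> F\<phi>' by simp
qed

section \<open>Local integrability of powers of the norm\<close>

lemma emeasure_cball_eq_power:
  fixes c :: "'a::euclidean_space"
  assumes "0 \<le> r"
  shows "emeasure lborel (cball c r) = ennreal (r ^ DIM('a) * measure lborel (ball (0::'a) 1))"
  using emeasure_lborel_cball_finite[of c r] content_ball_conv_unit_ball[OF assms, of c]
  by (simp add: emeasure_eq_ennreal_measure content_cball_conv_ball)

lemma dyadic_scale_exists:
  fixes r s :: real
  assumes "0 < r" "r \<le> 1" "0 \<le> s"
  obtains k :: nat where "r \<le> 2 powr - real k" "r powr - s \<le> 2 powr ((real k + 1) * s)"
proof -
  define t where "t = - log 2 r"
  have "0 \<le> t" and r: "r = 2 powr - t"
    using assms unfolding t_def by auto
  define k where "k = nat \<lfloor>t\<rfloor>"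
  have k: "real k \<le> t" "t \<le> real k + 1"
    unfolding k_def using \<open>0 \<le> t\<close> by linarith+
  show ?thesis
  proof
    show "r \<le> 2 powr - real k"
      unfolding r using k by simp
    show "r powr - s \<le> 2 powr ((real k + 1) * s)"
      unfolding r powr_powr using k assms(3) by (simp add: mult_right_mono)
  qed
qed

lemma indicator_cball_norm_powr_le_dyadic_sum:
  fixes x :: "'a::real_normed_vector"
  assumes "0 \<le> s"
  shows "ennreal (indicator (cball 0 1) x * norm x powr - s)
    \<le> (\<Sum>k. ennreal (2 powr ((real k + 1) * s)) * indicator (cball 0 (2 powr - real k)) x)"
proof (cases "x \<in> cball 0 1 \<and> x \<noteq> 0")
  case True
  then obtain k where k: "norm x \<le> 2 powr - real k" "norm x powr - s \<le> 2 powr ((real k + 1) * s)"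
    using dyadic_scale_exists[of "norm x" s] assms by auto
  then have "ennreal (indicator (cball 0 1) x * norm x powr - s)
      \<le> ennreal (2 powr ((real k + 1) * s)) * indicator (cball 0 (2 powr - real k)) x"
    using True by (simp add: ennreal_leI)
  also have "\<dots> \<le> (\<Sum>k. ennreal (2 powr ((real k + 1) * s)) * indicator (cball 0 (2 powr - real k)) x)"
    using sum_le_suminf[OF summableI, of "{k}"] by simp
  finally show ?thesis .
qed auto

text \<open>The volumes of the dyadic balls decay like \<open>2 powr (- k n)\<close>, so the dyadic majorant has a
  geometric series with ratio \<open>2 powr (s - n) < 1\<close> as integral.\<close>

lemma integrable_indicator_cball_norm_powr:
  fixes s :: real
  assumes s: "0 \<le> s" "s < real DIM('a)"
  shows "integrable lborel (\<lambda>x::'a::euclidean_space. indicator (cball 0 1) x * norm x powr - s)"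
proof -
  define n where "n = real DIM('a)"
  define V where "V = measure lborel (ball (0::'a) 1)"
  define c where "c k = 2 powr ((real k + 1) * s)" for k :: nat
  define \<rho> where "\<rho> k = 2 powr - real k" for k :: nat
  have [measurable]: "cball (0::'a) r \<in> sets lborel" for r
    by (simp add: borel_closed)
  have ball_integral: "(\<integral>\<^sup>+x. ennreal (c k) * indicator (cball (0::'a) (\<rho> k)) x \<partial>lborel)
      = ennreal (2 powr s * V * (2 powr (s - n)) ^ k)" for k
  proof -
    have "(\<integral>\<^sup>+x. ennreal (c k) * indicator (cball (0::'a) (\<rho> k)) x \<partial>lborel)
        = ennreal (c k) * emeasure lborel (cball (0::'a) (\<rho> k))"
      by (simp add: nn_integral_cmult_indicator)
    also have "\<dots> = ennreal (c k * (\<rho> k ^ DIM('a) * V))"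
      unfolding V_def by (subst emeasure_cball_eq_power) (auto simp: \<rho>_def c_def ennreal_mult)
    also have "c k * (\<rho> k ^ DIM('a) * V) = 2 powr s * V * (2 powr (s - n)) ^ k"
      unfolding c_def \<rho>_def n_def
      by (simp add: powr_realpow[symmetric] powr_powr powr_add[symmetric] algebra_simps)
    finally show ?thesis .
  qed
  have "summable (\<lambda>k. 2 powr s * V * (2 powr (s - n)) ^ k)"
    using s unfolding n_def by (intro summable_mult summable_geometric) (simp add: powr_less_one)
  then have finite: "(\<Sum>k. ennreal (2 powr s * V * (2 powr (s - n)) ^ k)) < \<infinity>"
    by (simp add: V_def ennreal_suminf_neq_top less_top)
  have "(\<integral>\<^sup>+x. ennreal (indicator (cball (0::'a) 1) x * norm x powr - s) \<partial>lborel)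
      \<le> (\<integral>\<^sup>+x. (\<Sum>k. ennreal (c k) * indicator (cball (0::'a) (\<rho> k)) x) \<partial>lborel)"
    unfolding c_def \<rho>_def by (intro nn_integral_mono indicator_cball_norm_powr_le_dyadic_sum s)
  also have "\<dots> = (\<Sum>k. \<integral>\<^sup>+x. ennreal (c k) * indicator (cball (0::'a) (\<rho> k)) x \<partial>lborel)"
    by (rule nn_integral_suminf) measurable
  also have "\<dots> < \<infinity>"
    using finite by (simp add: ball_integral)
  finally show ?thesis
    by (simp add: integrable_iff_bounded)
qed

lemma set_integrable_norm_powr:
  fixes b :: real
  assumes b: "- real DIM('a) < b" and K: "compact K"
  shows "set_integrable lborel K (\<lambda>x::'a::euclidean_space. norm x powr b)"
proof -
  have [measurable]: "K \<in> sets lborel" using K by (simp add: borel_compact)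
  obtain R where R: "\<And>x. x \<in> K \<Longrightarrow> norm x \<le> R"
    using compact_imp_bounded[OF K] unfolding bounded_iff by blast
  have const: "integrable lborel (\<lambda>x. indicator K x *\<^sub>R c)" for c :: real
    by (rule borel_integrable_compact[OF K continuous_on_const])
  show ?thesis
    unfolding set_integrable_def
  proof (cases "0 \<le> b")
    case True
    show "integrable lborel (\<lambda>x. indicator K x *\<^sub>R norm x powr b)"
    proof (rule Bochner_Integration.integrable_bound[OF const[of "R powr b"]])
      show "AE x in lborel. norm (indicator K x *\<^sub>R norm x powr b) \<le> norm (indicator K x *\<^sub>R R powr b)"
        using R True by (intro AE_I2) (auto simp: indicator_def intro: powr_mono2)
    qed simp
  next
    case False
    have "integrable lborel (\<lambda>x::'a. indicator (cball 0 1) x * norm x powr - (- b))"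
      by (rule integrable_indicator_cball_norm_powr) (use b False in auto)
    then have "integrable lborel (\<lambda>x. indicator (cball 0 1) x * norm x powr - (- b) + indicator K x *\<^sub>R 1)"
      using const by (rule Bochner_Integration.integrable_add)
    then show "integrable lborel (\<lambda>x. indicator K x *\<^sub>R norm x powr b)"
    proof (rule Bochner_Integration.integrable_bound)
      show "AE x in lborel. norm (indicator K x *\<^sub>R norm x powr b)
          \<le> norm (indicator (cball 0 1) x * norm x powr - (- b) + indicator K x *\<^sub>R 1)"
        using False by (intro AE_I2) (auto simp: indicator_def intro: less_imp_le[OF powr_less_one])
    qed simp
  qed
qed

lemma locally_Lp_if_dominated:
  fixes g :: "real^'n::finite \<Rightarrow> real"
  assumes g: "g \<in> borel_measurable lborel"
    and h: "\<And>K. compact K \<Longrightarrow> set_integrable lborel K h"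
    and le: "\<And>x. \<bar>g x\<bar> powr q \<le> h x"
  shows "locally_Lp q g"
  unfolding locally_Lp_def
proof (intro conjI allI impI g)
  fix K :: "(real^'n) set" assume K: "compact K"
  have [measurable]: "K \<in> sets lborel" using K by (simp add: borel_compact)
  show "set_integrable lborel K (\<lambda>x. \<bar>g x\<bar> powr q)"
    unfolding set_integrable_def
  proof (rule Bochner_Integration.integrable_bound)
    show "integrable lborel (\<lambda>x. indicator K x *\<^sub>R h x)"
      using h[OF K] unfolding set_integrable_def .
    show "AE x in lborel. norm (indicator K x *\<^sub>R \<bar>g x\<bar> powr q) \<le> norm (indicator K x *\<^sub>R h x)"
      using le by (intro AE_I2) (auto simp: indicator_def intro: order_trans[OF _ abs_ge_self])
  qed (use g in measurable)
qed

section \<open>The function \<open>f_alpha\<close>\<close>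

definition grad_f_alpha :: "real \<Rightarrow> 'n::finite \<Rightarrow> real^'n \<Rightarrow> real" where
  "grad_f_alpha \<alpha> i x = (1 + \<alpha>) * min (norm x) 1 powr (\<alpha> - 1) * x $ i"

lemma has_derivative_norm_powr:
  fixes y :: "'a::real_inner"
  assumes "y \<noteq> 0"
  shows "((\<lambda>x. norm x powr a) has_derivative (\<lambda>h. a * norm y powr (a - 2) * (y \<bullet> h))) (at y)"
proof -
  have r: "0 < norm y" using assms by simp
  have "((\<lambda>s. s powr a) has_derivative (*) (a * norm y powr (a - 1))) (at (norm y))"
    using has_real_derivative_powr[OF r, of a] by (simp add: has_field_derivative_def)
  from diff_chain_at[OF has_derivative_norm[OF assms] this]
  have "((\<lambda>x. norm x powr a) has_derivative (\<lambda>h. a * norm y powr (a - 1) * (h \<bullet> sgn y))) (at y)"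
    by (simp add: o_def)
  moreover have "norm y powr (a - 1) * (h \<bullet> sgn y) = norm y powr (a - 2) * (y \<bullet> h)" for h
    using r by (simp add: sgn_div_norm inner_commute powr_diff field_simps power2_eq_square)
  ultimately show ?thesis by (simp add: mult.assoc)
qed

lemma f_alpha_has_derivative:
  fixes y :: "real^'n::finite"
  assumes "norm y \<noteq> 0" "norm y \<noteq> 1"
  shows "(f_alpha \<alpha> has_derivative (\<lambda>h. (1 + \<alpha>) * min (norm y) 1 powr (\<alpha> - 1) * (y \<bullet> h))) (at y)"
proof (cases "norm y < 1")
  case True
  have "((\<lambda>x. norm x powr (1 + \<alpha>) + (\<alpha> - 1) / 2) has_derivative
      (\<lambda>h. (1 + \<alpha>) * norm y powr (\<alpha> - 1) * (y \<bullet> h))) (at y)"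
    using has_derivative_add[OF has_derivative_norm_powr[of y "1 + \<alpha>"] has_derivative_const] assms
    by (simp add: diff_add_eq_diff_diff_swap)
  then have "(f_alpha \<alpha> has_derivative (\<lambda>h. (1 + \<alpha>) * norm y powr (\<alpha> - 1) * (y \<bullet> h))) (at y)"
    by (rule has_derivative_transform_within_open[where s="ball 0 1"])
      (use True in \<open>auto simp: f_alpha_def\<close>)
  then show ?thesis using True by simp
next
  case False
  have "((\<lambda>x. (1 + \<alpha>) / 2 * (x \<bullet> x)) has_derivative (\<lambda>h. (1 + \<alpha>) / 2 * (h \<bullet> y + y \<bullet> h))) (at y)"
    by (auto intro!: derivative_eq_intros)
  then have "(f_alpha \<alpha> has_derivative (\<lambda>h. (1 + \<alpha>) / 2 * (h \<bullet> y + y \<bullet> h))) (at y)"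
    by (rule has_derivative_transform_within_open[where s="- cball 0 1"])
      (use False assms in \<open>auto simp: f_alpha_def power2_norm_eq_inner\<close>)
  then show ?thesis
    using False by (simp add: inner_commute)
qed

lemma f_alpha_differentiable_cpartial:
  fixes y :: "real^'n::finite"
  assumes "norm y \<noteq> 0" "norm y \<noteq> 1"
  shows "f_alpha \<alpha> differentiable (at y) \<and> cpartial i (f_alpha \<alpha>) y = grad_f_alpha \<alpha> i y"
  using f_alpha_has_derivative[OF assms, of \<alpha>] frechet_derivative_at
  by (fastforce simp: differentiable_def cpartial_def grad_f_alpha_def inner_axis)

lemma grad_f_alpha_has_derivative:
  fixes y :: "real^'n::finite"
  assumes "norm y \<noteq> 0" "norm y \<noteq> 1"
  obtains G' where "(grad_f_alpha \<alpha> i has_derivative G') (at y)" "\<And>j. G' (axis j 1) = hess_alpha \<alpha> i j y"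
proof (cases "norm y < 1")
  case True
  let ?G' = "\<lambda>h. (1 + \<alpha>) * (norm y powr (\<alpha> - 1) * h $ i
      + (\<alpha> - 1) * norm y powr (\<alpha> - 1 - 2) * (y \<bullet> h) * y $ i)"
  have coord: "((\<lambda>x::real^'n. x $ i) has_derivative (\<lambda>h. h $ i)) (at y)"
    by (rule bounded_linear_imp_has_derivative[OF bounded_linear_vec_nth])
  have "((\<lambda>x. norm x powr (\<alpha> - 1)) has_derivative
      (\<lambda>h. (\<alpha> - 1) * norm y powr (\<alpha> - 1 - 2) * (y \<bullet> h))) (at y)"
    by (rule has_derivative_norm_powr) (use assms in simp)
  from has_derivative_mult_right[OF has_derivative_mult[OF this coord], of "1 + \<alpha>"]
  have "((\<lambda>x. (1 + \<alpha>) * (norm x powr (\<alpha> - 1) * x $ i)) has_derivative ?G') (at y)"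
    by simp
  then have "(grad_f_alpha \<alpha> i has_derivative ?G') (at y)"
    by (rule has_derivative_transform_within_open[where s="ball 0 1"])
      (use True in \<open>auto simp: grad_f_alpha_def\<close>)
  moreover have "?G' (axis j 1) = hess_alpha \<alpha> i j y" for j
    using True unfolding inner_axis by (simp add: hess_alpha_def axis_def algebra_simps)
  ultimately show ?thesis using that by blast
next
  case False
  let ?G' = "\<lambda>h. (1 + \<alpha>) * h $ i"
  have "((\<lambda>x. (1 + \<alpha>) * x $ i) has_derivative ?G') (at y)"
    by (intro has_derivative_mult_right bounded_linear_imp_has_derivative bounded_linear_vec_nth)
  then have "(grad_f_alpha \<alpha> i has_derivative ?G') (at y)"
    by (rule has_derivative_transform_within_open[where s="- cball 0 1"])
      (use False assms in \<open>auto simp: grad_f_alpha_def\<close>)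
  moreover have "?G' (axis j 1) = hess_alpha \<alpha> i j y" for j
    using False by (simp add: hess_alpha_def axis_def)
  ultimately show ?thesis using that by blast
qed

lemma grad_f_alpha_differentiable_cpartial:
  fixes y :: "real^'n::finite"
  assumes "norm y \<noteq> 0" "norm y \<noteq> 1"
  shows "grad_f_alpha \<alpha> i differentiable (at y) \<and> cpartial j (grad_f_alpha \<alpha> i) y = hess_alpha \<alpha> i j y"
  using grad_f_alpha_has_derivative[OF assms] frechet_derivative_at
  by (metis cpartial_def differentiable_def)

lemma cpartial_cpartial_f_alpha:
  fixes x :: "real^'n::finite"
  assumes "norm x \<noteq> 0" "norm x \<noteq> 1"
  shows "cpartial j (cpartial i (f_alpha \<alpha>)) x = hess_alpha \<alpha> i j x"
proof -
  obtain G' where G': "(grad_f_alpha \<alpha> i has_derivative G') (at x)" "\<And>j. G' (axis j 1) = hess_alpha \<alpha> i j x"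
    using grad_f_alpha_has_derivative[OF assms] by blast
  have "open {y::real^'n. norm y \<noteq> 0 \<and> norm y \<noteq> 1}"
    by (simp add: Collect_conj_eq open_Collect_neq continuous_intros open_Int)
  then have "(cpartial i (f_alpha \<alpha>) has_derivative G') (at x)"
    using assms
    by (intro has_derivative_transform_within_open[OF G'(1)]) (auto simp: f_alpha_differentiable_cpartial)
  then show ?thesis
    unfolding cpartial_def[of j] using G'(2) frechet_derivative_at by metis
qed

lemma f_alpha_continuous:
  assumes "0 \<le> \<alpha>"
  shows "continuous_on UNIV (f_alpha \<alpha> :: real^'n::finite \<Rightarrow> real)"
proof -
  have "continuous_on (cball 0 1 \<union> - ball 0 1)
      (\<lambda>x::real^'n. if norm x \<le> 1 then norm x powr (1 + \<alpha>) + (\<alpha> - 1) / 2 else (1 + \<alpha>) / 2 * (norm x)\<^sup>2)"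
    using assms
    by (intro continuous_on_cases continuous_intros continuous_on_powr') (auto simp: field_simps)
  moreover have "cball 0 1 \<union> - ball (0::real^'n) 1 = UNIV" by auto
  ultimately show ?thesis unfolding f_alpha_def[abs_def] by simp
qed

lemma grad_f_alpha_isCont:
  fixes y :: "real^'n::finite"
  assumes "y \<noteq> 0"
  shows "isCont (grad_f_alpha \<alpha> i) y"
proof -
  have "((\<lambda>x. min (norm x) 1) \<longlongrightarrow> min (norm y) 1) (at y)"
    by (intro tendsto_intros)
  then have "((\<lambda>x. min (norm x) 1 powr (\<alpha> - 1)) \<longlongrightarrow> min (norm y) 1 powr (\<alpha> - 1)) (at y)"
    by (rule tendsto_powr) (use assms in \<open>auto simp: min_def\<close>)
  then show ?thesis
    unfolding isCont_def grad_f_alpha_def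
    by (intro tendsto_mult tendsto_const tendsto_vec_nth tendsto_ident_at)
qed

lemma abs_grad_f_alpha_le_norm_powr:
  fixes x :: "real^'n::finite"
  assumes "0 \<le> \<alpha>" "norm x < 1"
  shows "\<bar>grad_f_alpha \<alpha> i x\<bar> \<le> (1 + \<alpha>) * norm x powr \<alpha>"
proof (cases "x = 0")
  case False
  have "\<bar>grad_f_alpha \<alpha> i x\<bar> = (1 + \<alpha>) * norm x powr (\<alpha> - 1) * \<bar>x $ i\<bar>"
    using assms by (simp add: grad_f_alpha_def abs_mult)
  also have "\<dots> \<le> (1 + \<alpha>) * norm x powr (\<alpha> - 1) * norm x"
    using assms by (intro mult_left_mono component_le_norm_cart) auto
  also have "\<dots> = (1 + \<alpha>) * norm x powr \<alpha>"
    using False by (simp add: powr_diff)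
  finally show ?thesis .
qed (simp add: grad_f_alpha_def)

lemma abs_grad_f_alpha_le:
  fixes x :: "real^'n::finite"
  assumes "0 \<le> \<alpha>"
  shows "\<bar>grad_f_alpha \<alpha> i x\<bar> \<le> (1 + \<alpha>) * (1 + norm x)"
proof (cases "norm x < 1")
  case True
  have "\<bar>grad_f_alpha \<alpha> i x\<bar> \<le> (1 + \<alpha>) * norm x powr \<alpha>"
    by (rule abs_grad_f_alpha_le_norm_powr[OF assms True])
  also have "\<dots> \<le> (1 + \<alpha>) * 1"
    using assms True powr_mono2[of \<alpha> "norm x" 1] by (intro mult_left_mono) auto
  also have "\<dots> \<le> (1 + \<alpha>) * (1 + norm x)"
    using assms by (intro mult_left_mono) auto
  finally show ?thesis .
next
  case False
  then have "\<bar>grad_f_alpha \<alpha> i x\<bar> = (1 + \<alpha>) * \<bar>x $ i\<bar>"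
    using assms by (simp add: grad_f_alpha_def abs_mult)
  also have "\<dots> \<le> (1 + \<alpha>) * (1 + norm x)"
    using assms component_le_norm_cart[of x i] by (intro mult_left_mono) auto
  finally show ?thesis .
qed

lemma grad_f_alpha_isCont_0:
  assumes "0 < \<alpha>"
  shows "isCont (grad_f_alpha \<alpha> i :: real^'n::finite \<Rightarrow> real) 0"
proof -
  have lim: "((\<lambda>x::real^'n. norm x powr \<alpha>) \<longlongrightarrow> 0) (at 0)"
    by (rule tendsto_zero_powrI[OF tendsto_norm_zero[OF tendsto_ident_at] tendsto_const]) (use assms in simp_all)
  have bound_lim: "((\<lambda>x::real^'n. (1 + \<alpha>) * norm x powr \<alpha>) \<longlongrightarrow> 0) (at 0)"
    using tendsto_mult[OF tendsto_const[of "1 + \<alpha>"] lim] by simp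
  have bound: "\<forall>\<^sub>F x in at (0::real^'n). norm (grad_f_alpha \<alpha> i x) \<le> (1 + \<alpha>) * norm x powr \<alpha>"
  proof -
    have "norm (grad_f_alpha \<alpha> i x) \<le> (1 + \<alpha>) * norm x powr \<alpha>" if "dist x 0 < 1" for x :: "real^'n"
      using abs_grad_f_alpha_le_norm_powr[of \<alpha> x i] assms that by simp
    then show ?thesis
      unfolding eventually_at by (intro exI[of _ 1]) simp
  qed
  have "(grad_f_alpha \<alpha> i \<longlongrightarrow> 0) (at (0::real^'n))"
    by (rule Lim_null_comparison[OF bound bound_lim])
  moreover have "grad_f_alpha \<alpha> i 0 = 0"
    by (simp add: grad_f_alpha_def)
  ultimately show ?thesis
    unfolding isCont_def by simp
qed

text \<open>For \<open>\<alpha> = 0\<close> the gradient \<open>x / \<parallel>x\<parallel>\<close> is discontinuous at the origin, which only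
  a null set of coordinate lines passes through when \<open>n \<ge> 2\<close>.\<close>

lemma AE_axis_line_isCont_grad_f_alpha:
  assumes "0 < \<alpha> \<or> CARD('n) \<ge> 2"
  shows "AE x::real^'n::finite in lborel. \<forall>t. isCont (grad_f_alpha \<alpha> i) (x + t *\<^sub>R axis j 1)"
proof (cases "0 < \<alpha>")
  case True
  have "isCont (grad_f_alpha \<alpha> i) y" for y :: "real^'n"
    by (cases "y = 0") (simp_all add: True grad_f_alpha_isCont_0 grad_f_alpha_isCont)
  then show ?thesis by simp
next
  case False
  with assms have "CARD('n) \<ge> 2" by simp
  from AE_axis_line_avoids_0[OF this, of j] show ?thesis
    by (rule eventually_mono) (simp add: grad_f_alpha_isCont)
qed

lemma grad_f_alpha_measurable: "(grad_f_alpha \<alpha> i :: real^'n::finite \<Rightarrow> real) \<in> borel_measurable lborel"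
proof -
  have "continuous_on (- {0}) (grad_f_alpha \<alpha> i :: real^'n \<Rightarrow> real)"
    by (intro continuous_at_imp_continuous_on ballI grad_f_alpha_isCont) auto
  then show ?thesis
    using borel_measurable_continuous_countable_exceptions[of "{0}"] by simp
qed

lemma hess_alpha_measurable: "(hess_alpha \<alpha> i j :: real^'n::finite \<Rightarrow> real) \<in> borel_measurable lborel"
  unfolding hess_alpha_def[abs_def] by measurable

lemma abs_hess_alpha_le:
  fixes x :: "real^'n::finite"
  assumes "0 \<le> \<alpha>" "0 < norm x" "norm x < 1"
  shows "\<bar>hess_alpha \<alpha> i j x\<bar> \<le> (1 + \<alpha>) * (1 + \<bar>\<alpha> - 1\<bar>) * norm x powr (\<alpha> - 1)"
proof -
  define r where "r = norm x"
  have r: "0 < r" using assms unfolding r_def by auto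
  have xij: "\<bar>x $ i * x $ j\<bar> \<le> r * r"
    unfolding r_def abs_mult by (intro mult_mono component_le_norm_cart) auto
  have "\<bar>(\<alpha> - 1) * r powr (\<alpha> - 3) * (x $ i * x $ j)\<bar> = \<bar>\<alpha> - 1\<bar> * (r powr (\<alpha> - 3) * \<bar>x $ i * x $ j\<bar>)"
    by (simp add: abs_mult)
  also have "\<dots> \<le> \<bar>\<alpha> - 1\<bar> * (r powr (\<alpha> - 3) * (r * r))"
    using xij by (intro mult_left_mono) auto
  also have "r powr (\<alpha> - 3) * (r * r) = r powr (\<alpha> - 1)"
  proof -
    have "r powr (\<alpha> - 3) * (r * r) = r powr (1 + (1 + (\<alpha> - 3)))"
      using r by (simp add: powr_mult_base mult_ac)
    then show ?thesis by simp
  qed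
  finally have "\<bar>(\<alpha> - 1) * r powr (\<alpha> - 3) * (x $ i * x $ j)\<bar> \<le> \<bar>\<alpha> - 1\<bar> * r powr (\<alpha> - 1)" .
  moreover have "\<bar>r powr (\<alpha> - 1) * (if i = j then 1 else 0)\<bar> \<le> r powr (\<alpha> - 1)"
    by simp
  ultimately have "\<bar>r powr (\<alpha> - 1) * (if i = j then 1 else 0) + (\<alpha> - 1) * r powr (\<alpha> - 3) * (x $ i * x $ j)\<bar>
      \<le> (1 + \<bar>\<alpha> - 1\<bar>) * r powr (\<alpha> - 1)"
    using abs_triangle_ineq[of "r powr (\<alpha> - 1) * (if i = j then 1 else 0)"
        "(\<alpha> - 1) * r powr (\<alpha> - 3) * (x $ i * x $ j)"]
    by (simp add: distrib_right)
  then have "(1 + \<alpha>) * \<bar>r powr (\<alpha> - 1) * (if i = j then 1 else 0) + (\<alpha> - 1) * r powr (\<alpha> - 3) * (x $ i * x $ j)\<bar>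
      \<le> (1 + \<alpha>) * ((1 + \<bar>\<alpha> - 1\<bar>) * r powr (\<alpha> - 1))"
    by (rule mult_left_mono) (use assms(1) in simp)
  then show ?thesis
    using assms unfolding hess_alpha_def r_def by (simp add: abs_mult mult.assoc)
qed

lemma locally_Lp_f_alpha:
  assumes "0 \<le> \<alpha>" "0 < q"
  shows "locally_Lp q (f_alpha \<alpha> :: real^'n::finite \<Rightarrow> real)"
proof (rule locally_Lp_if_dominated)
  show "(f_alpha \<alpha> :: real^'n \<Rightarrow> real) \<in> borel_measurable lborel"
    using borel_measurable_continuous_onI[OF f_alpha_continuous[OF assms(1)]] by simp
  show "set_integrable lborel K (\<lambda>x. \<bar>f_alpha \<alpha> x\<bar> powr q)" if "compact K" for K :: "(real^'n) set"
    unfolding set_integrable_def using assms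
    by (intro borel_integrable_compact[OF that] continuous_on_powr' continuous_intros
        continuous_on_subset[OF f_alpha_continuous]) auto
qed simp

lemma locally_Lp_grad_f_alpha:
  assumes "0 \<le> \<alpha>" "0 < q"
  shows "locally_Lp q (grad_f_alpha \<alpha> i :: real^'n::finite \<Rightarrow> real)"
proof (rule locally_Lp_if_dominated[OF grad_f_alpha_measurable])
  show "set_integrable lborel K (\<lambda>x. ((1 + \<alpha>) * (1 + norm x)) powr q)" if "compact K" for K :: "(real^'n) set"
  proof -
    have "1 + norm x \<noteq> 0" for x :: "real^'n"
      using norm_ge_zero[of x] by linarith
    then show ?thesis
      unfolding set_integrable_def using assms
      by (intro borel_integrable_compact[OF that] continuous_intros) auto
  qed
  show "\<bar>grad_f_alpha \<alpha> i x\<bar> powr q \<le> ((1 + \<alpha>) * (1 + norm x)) powr q" for x :: "real^'n"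
    using abs_grad_f_alpha_le[OF assms(1)] assms(2) by (intro powr_mono2) auto
qed

lemma abs_hess_alpha_powr_le:
  fixes x :: "real^'n::finite"
  assumes \<alpha>: "0 \<le> \<alpha>" and q: "0 < q"
  shows "\<bar>hess_alpha \<alpha> i j x\<bar> powr q
    \<le> ((1 + \<alpha>) * (1 + \<bar>\<alpha> - 1\<bar>)) powr q * (norm x powr ((\<alpha> - 1) * q) + 1)"
proof -
  define C where "C = (1 + \<alpha>) * (1 + \<bar>\<alpha> - 1\<bar>)"
  have nonneg: "0 \<le> C powr q * norm x powr ((\<alpha> - 1) * q)"
    by simp
  consider "x = 0" | "0 < norm x" "norm x < 1" | "1 \<le> norm x"
    by (cases "x = 0"; cases "norm x < 1") auto
  then have "\<bar>hess_alpha \<alpha> i j x\<bar> powr q \<le> C powr q * (norm x powr ((\<alpha> - 1) * q) + 1)"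
  proof cases
    case 1
    then show ?thesis
      using nonneg by (simp add: hess_alpha_def)
  next
    case 2
    have "\<bar>hess_alpha \<alpha> i j x\<bar> powr q \<le> (C * norm x powr (\<alpha> - 1)) powr q"
      using abs_hess_alpha_le[OF \<alpha> 2] q unfolding C_def by (intro powr_mono2) auto
    also have "\<dots> = C powr q * norm x powr ((\<alpha> - 1) * q)"
      by (simp add: powr_mult powr_powr)
    finally show ?thesis
      by (simp add: distrib_left add_increasing2)
  next
    case 3
    have "\<bar>hess_alpha \<alpha> i j x\<bar> \<le> 1 + \<alpha>"
      using 3 \<alpha> by (simp add: hess_alpha_def)
    also have "1 + \<alpha> \<le> C"
      using mult_left_mono[of 1 "1 + \<bar>\<alpha> - 1\<bar>" "1 + \<alpha>"] \<alpha> unfolding C_def by simp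
    finally have "\<bar>hess_alpha \<alpha> i j x\<bar> powr q \<le> C powr q"
      using q by (intro powr_mono2) auto
    then show ?thesis
      using nonneg by (simp add: distrib_left add_increasing)
  qed
  then show ?thesis
    unfolding C_def .
qed

lemma locally_Lp_hess_alpha:
  assumes \<alpha>: "0 \<le> \<alpha>" and q: "0 < q" and sing: "(1 - \<alpha>) * q < real CARD('n::finite)"
  shows "locally_Lp q (hess_alpha \<alpha> i j :: real^'n \<Rightarrow> real)"
proof (rule locally_Lp_if_dominated[OF hess_alpha_measurable _ abs_hess_alpha_powr_le[OF \<alpha> q]])
  fix K :: "(real^'n) set" assume K: "compact K"
  have "set_integrable lborel K (\<lambda>x::real^'n. norm x powr ((\<alpha> - 1) * q))"
    using sing K by (intro set_integrable_norm_powr) (auto simp: algebra_simps)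
  moreover have "set_integrable lborel K (\<lambda>x::real^'n. 1::real)"
    unfolding set_integrable_def by (rule borel_integrable_compact[OF K continuous_on_const])
  ultimately show "set_integrable lborel K
      (\<lambda>x. ((1 + \<alpha>) * (1 + \<bar>\<alpha> - 1\<bar>)) powr q * (norm x powr ((\<alpha> - 1) * q) + 1))"
    by (intro set_integrable_mult_right set_integral_add)
qed

lemma finite_axis_line_sections_spheres:
  fixes x :: "real^'n::finite"
  shows "finite {t. x + t *\<^sub>R axis i 1 \<in> {y. norm y = 0 \<or> norm y = 1}}"
  using finite_line_Int_sphere[of "axis i 1" x 0] finite_line_Int_sphere[of "axis i 1" x 1]
  by (simp add: Collect_disj_eq)

lemma weak_partial_f_alpha:
  assumes "0 \<le> \<alpha>"
  shows "weak_partial i (f_alpha \<alpha> :: real^'n::finite \<Rightarrow> real) (grad_f_alpha \<alpha> i)"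
proof (rule weak_partial_if_differentiable_off[OF _ _ _ finite_axis_line_sections_spheres])
  show "locally_Lp 1 (f_alpha \<alpha> :: real^'n \<Rightarrow> real)" "locally_Lp 1 (grad_f_alpha \<alpha> i :: real^'n \<Rightarrow> real)"
    using assms by (simp_all add: locally_Lp_f_alpha locally_Lp_grad_f_alpha)
  show "AE x::real^'n in lborel. \<forall>t. isCont (f_alpha \<alpha>) (x + t *\<^sub>R axis i 1)"
    by (intro AE_I2 allI) (use f_alpha_continuous[OF assms] in \<open>auto simp: continuous_on_eq_continuous_at\<close>)
qed (simp add: f_alpha_differentiable_cpartial)

lemma locally_Lp_1_hess_alpha:
  assumes "0 \<le> \<alpha>" "0 < \<alpha> \<or> CARD('n) \<ge> 2"
  shows "locally_Lp 1 (hess_alpha \<alpha> i j :: real^'n::finite \<Rightarrow> real)"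
proof (rule locally_Lp_hess_alpha[OF assms(1)])
  have "1 - \<alpha> < real CARD('n)"
  proof (cases "0 < \<alpha>")
    case True
    then have "1 - \<alpha> < 1" by simp
    also have "1 \<le> real CARD('n)" by (simp add: Suc_leI)
    finally show ?thesis .
  next
    case False
    with assms(2) have "2 \<le> real CARD('n)" by simp
    with assms(1) show ?thesis by simp
  qed
  then show "(1 - \<alpha>) * 1 < real CARD('n)" by simp
qed simp

lemma weak_partial_grad_f_alpha:
  assumes "0 \<le> \<alpha>" "0 < \<alpha> \<or> CARD('n) \<ge> 2"
  shows "weak_partial j (grad_f_alpha \<alpha> i :: real^'n::finite \<Rightarrow> real) (hess_alpha \<alpha> i j)"
proof (rule weak_partial_if_differentiable_off[OF _ _ _ finite_axis_line_sections_spheres])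
  show "locally_Lp 1 (grad_f_alpha \<alpha> i :: real^'n \<Rightarrow> real)"
    using assms by (simp add: locally_Lp_grad_f_alpha)
  show "locally_Lp 1 (hess_alpha \<alpha> i j :: real^'n \<Rightarrow> real)"
    using assms by (rule locally_Lp_1_hess_alpha)
  show "AE x::real^'n in lborel. \<forall>t. isCont (grad_f_alpha \<alpha> i) (x + t *\<^sub>R axis j 1)"
    using assms(2) by (rule AE_axis_line_isCont_grad_f_alpha)
qed (simp add: grad_f_alpha_differentiable_cpartial)

lemma exponent_condition:
  fixes p \<alpha> :: real and n :: nat
  assumes "1 \<le> p" "0 \<le> \<alpha>" "p < n \<or> (n \<le> p \<and> (p - n) / p < \<alpha>)"
  shows "(1 - \<alpha>) * p < n" "0 < \<alpha> \<or> 2 \<le> n"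
proof -
  show "(1 - \<alpha>) * p < n"
    using assms(3)
  proof
    assume "p < n"
    moreover have "0 \<le> \<alpha> * p" using assms(1,2) by simp
    ultimately show ?thesis by (simp add: left_diff_distrib)
  next
    assume "n \<le> p \<and> (p - n) / p < \<alpha>"
    then show ?thesis using assms(1) by (simp add: divide_less_eq algebra_simps)
  qed
  show "0 < \<alpha> \<or> 2 \<le> n"
  proof (rule disjCI)
    assume "\<not> 2 \<le> n"
    then have "real n \<le> 1" by simp
    with assms(1,3) have "(p - n) / p < \<alpha>" by auto
    moreover have "0 \<le> (p - n) / p" using \<open>real n \<le> 1\<close> assms(1) by simp
    ultimately show "0 < \<alpha>" by linarith
  qed
qed

theorem lemma2p6:
  fixes p \<alpha> :: real
  assumes "p \<ge> 1" and "\<alpha> \<ge> 0"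
    and "(p < real CARD('n::finite)) \<or> (p \<ge> real CARD('n) \<and> \<alpha> > (p - real CARD('n)) / p)"
  shows "W2p_loc p (f_alpha \<alpha> :: real^'n \<Rightarrow> real)
    \<and> (\<forall>H :: 'n \<Rightarrow> 'n \<Rightarrow> real^'n \<Rightarrow> real.
          (\<forall>i j. locally_Lp 1 (H i j) \<and> weak_second i j (f_alpha \<alpha>) (H i j)) \<longrightarrow>
          (AE x in lborel. \<forall>i j. H i j x = hess_alpha \<alpha> i j x))
    \<and> (\<forall>x :: real^'n. norm x \<noteq> 0 \<and> norm x \<noteq> 1 \<longrightarrow>
          (\<forall>i j. cpartial j (cpartial i (f_alpha \<alpha>)) x = hess_alpha \<alpha> i j x))"
proof (intro conjI allI impI)
  have p: "0 < p" using assms(1) by simp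
  note exponent = exponent_condition[OF assms(1,2,3)]
  note grad = weak_partial_f_alpha[OF assms(2)]
  note hess = weak_partial_grad_f_alpha[OF assms(2) exponent(2)]
  show "W2p_loc p (f_alpha \<alpha> :: real^'n \<Rightarrow> real)"
    unfolding W2p_loc_def
    using locally_Lp_f_alpha[OF assms(2) p] locally_Lp_grad_f_alpha[OF assms(2) p]
      locally_Lp_hess_alpha[OF assms(2) p exponent(1)] grad hess
    by (intro conjI exI[of _ "grad_f_alpha \<alpha>"] exI[of _ "hess_alpha \<alpha>"] allI) auto
  fix H :: "'n \<Rightarrow> 'n \<Rightarrow> real^'n \<Rightarrow> real"
  assume H: "\<forall>i j. locally_Lp 1 (H i j) \<and> weak_second i j (f_alpha \<alpha>) (H i j)"
  have "AE x in lborel. H i j x = hess_alpha \<alpha> i j x" for i j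
    using H weak_second_if_weak_partials[OF grad hess] locally_Lp_1_hess_alpha[OF assms(2) exponent(2)]
    by (intro weak_second_unique) auto
  then show "AE x in lborel. \<forall>i j. H i j x = hess_alpha \<alpha> i j x"
    by (simp add: AE_all_countable)
qed (simp add: cpartial_cpartial_f_alpha)

end
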